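(* Let $\Lambda=(\mathcal{L}\subset\mathbb{R}^s,\mathbb{R}^n)$ be a generic cut-and-project scheme, where $\mathcal{L}$ has associated matrix $L\in\mathbb{R}^{s\times s}$. Let $W_A\in\mathbb{R}^{n\times n}$, $W_B\in\mathbb{R}^{(s-n)\times(s-n)}$ and $Q\in\mathbb{Q}^{s\times s}$ be non-singular matrices. Define $\widetilde L=\begin{pmatrix}W_A&O\\O&W_B\end{pmatrix}LQ^{-1}$ and $\widetilde{\mathcal{L}}=\{\widetilde L\mathbf{r}:\mathbf{r}\in\mathbb{Z}^s\}$. Then $\widetilde\Lambda=(\widetilde{\mathcal{L}}\subset\mathbb{R}^s,\mathbb{R}^n)$ is also a generic cut-and-project scheme.
   Context: A lattice $\mathcal{L}\subset\mathbb{R}^s$ is $\{L\mathbf{r}:\mathbf{r}\in\mathbb{Z}^s\}$ for a non-singular $L\in\mathbb{R}^{s\times s}$ (an associated matrix). For $1\le n<s$ the scheme $(\mathcal{L}\subset\mathbb{R}^s,\mathbb{R}^n)$ has projections $\pi_\parallel(\mathbf{x})=(x_1,\dots,x_n)^\top$, $\pi_\perp(\mathbf{x})=(x_{n+1},\dots,x_s)^\top$; it is generic if $\pi_\parallel|_{\mathcal{L}}$ and $\pi_\perp|_{\mathcal{L}}$ are injective and $\pi_\perp(\mathcal{L})$ is dense in $\mathbb{R}^{s-n}$. *)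

theory Defs
  imports "HOL-Analysis.Analysis" "Jordan_Normal_Form.Gauss_Jordan_Elimination"
    "Jordan_Normal_Form.Determinant"
begin

definition int_vecs :: "nat \<Rightarrow> real vec set" where
  "int_vecs s = {r \<in> carrier_vec s. \<forall>i<s. r $ i \<in> \<int>}"

definition lattice_of :: "nat \<Rightarrow> real mat \<Rightarrow> real vec set" where
  "lattice_of s L = {L *\<^sub>v r | r. r \<in> int_vecs s}"

definition pi_par :: "nat \<Rightarrow> real vec \<Rightarrow> real vec" where
  "pi_par n x = vec_first x n"

definition pi_perp :: "nat \<Rightarrow> nat \<Rightarrow> real vec \<Rightarrow> real vec" where
  "pi_perp s n x = vec_last x (s - n)"

text \<open>Density of a subset of R^m (Euclidean topology; sup-norm balls).\<close>
definition dense_in_Rm :: "nat \<Rightarrow> real vec set \<Rightarrow> bool" where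
  "dense_in_Rm m S \<longleftrightarrow> (\<forall>y\<in>carrier_vec m. \<forall>e>0. \<exists>x\<in>S.
      x \<in> carrier_vec m \<and> (\<forall>i<m. \<bar>x $ i - y $ i\<bar> < e))"

definition generic_cps :: "nat \<Rightarrow> nat \<Rightarrow> real mat \<Rightarrow> bool" where
  "generic_cps s n L \<longleftrightarrow> 1 \<le> n \<and> n < s \<and> L \<in> carrier_mat s s \<and> det L \<noteq> 0 \<and>
     inj_on (pi_par n) (lattice_of s L) \<and>
     inj_on (pi_perp s n) (lattice_of s L) \<and>
     dense_in_Rm (s - n) (pi_perp s n ` lattice_of s L)"

end

theory Submission
  imports Defs
begin

text \<open>A block-diagonal matrix \<open>D = diag(W\<^sub>A, W\<^sub>B)\<close> maps the lattice of \<open>L\<close> onto that of \<open>D L\<close>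
  and acts on the two projections through the invertible maps \<open>W\<^sub>A\<close> and \<open>W\<^sub>B\<close>, so injectivity
  and density carry over; scalar multiples \<open>c L\<close> are the special case \<open>D = c I\<close>.
  A rational change of basis \<open>P = Q\<^sup>-\<^sup>1\<close> produces a commensurable lattice: if \<open>N P\<close> and
  \<open>M Q\<close> are integer matrices, then \<open>M \<Lambda>(L) \<subseteq> \<Lambda>(L P) \<subseteq> N\<^sup>-\<^sup>1 \<Lambda>(L)\<close>. Injectivity of the
  projections is inherited from the larger lattice and density of \<open>\<pi>\<^sub>\<perp>\<close> from the smaller one.\<close>

lemma common_denominator_exists:
  fixes A :: "rat set"
  assumes "finite A"
  obtains N :: int where "N > 0" and "\<And>x. x \<in> A \<Longrightarrow> of_int N * x \<in> \<int>"
proof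
  define N where "N = (\<Prod>x\<in>A. snd (quotient_of x))"
  show "N > 0"
    unfolding N_def by (rule prod_pos) (simp add: quotient_of_denom_pos')
  fix x assume x: "x \<in> A"
  obtain a b where ab: "quotient_of x = (a, b)" by force
  have N: "N = b * (\<Prod>y\<in>A - {x}. snd (quotient_of y))"
    unfolding N_def using prod.remove[OF assms x, of "\<lambda>y. snd (quotient_of y)"] ab by simp
  have "of_int b * x = of_int a"
    using quotient_of_div[OF ab] quotient_of_denom_pos[OF ab] by simp
  then have "of_int N * x = of_int (a * (\<Prod>y\<in>A - {x}. snd (quotient_of y)))"
    unfolding N by (simp add: ac_simps)
  then show "of_int N * x \<in> \<int>" by (metis Ints_of_int)
qed

lemma of_rat_mat_common_denominator:
  fixes P :: "rat mat"
  obtains N :: int where "N > 0"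
    and "\<forall>i<dim_row P. \<forall>j<dim_col P.
      (of_int N \<cdot>\<^sub>m map_mat of_rat P) $$ (i, j) \<in> (\<int> :: 'a :: field_char_0 set)"
proof -
  have "finite ((\<lambda>(i, j). P $$ (i, j)) ` ({..<dim_row P} \<times> {..<dim_col P}))" by simp
  then obtain N :: int where N: "N > 0"
    and entries: "\<And>i j. i < dim_row P \<Longrightarrow> j < dim_col P \<Longrightarrow> of_int N * P $$ (i, j) \<in> \<int>"
    by (rule common_denominator_exists) auto
  have "(of_int N \<cdot>\<^sub>m map_mat of_rat P) $$ (i, j) \<in> (\<int> :: 'a set)"
    if ij: "i < dim_row P" "j < dim_col P" for i j
  proof -
    obtain m where m: "of_int N * P $$ (i, j) = of_int m"
      using entries[OF ij] by (auto elim: Ints_cases)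
    have "(of_int N \<cdot>\<^sub>m map_mat of_rat P) $$ (i, j) = (of_rat (of_int N * P $$ (i, j)) :: 'a)"
      using ij by (simp add: of_rat_mult)
    also have "\<dots> = of_int m" using m by simp
    finally show ?thesis by simp
  qed
  with N that show ?thesis by blast
qed

lemma mat_inverse_exists:
  fixes A :: "'a :: field mat"
  assumes A: "A \<in> carrier_mat n n" and "det A \<noteq> 0"
  obtains B where "mat_inverse A = Some B" and "A * B = 1\<^sub>m n"
    and "B \<in> carrier_mat n n" and "det B \<noteq> 0"
proof -
  have "A \<in> Units (ring_mat TYPE('a) n n)" using det_non_zero_imp_unit[OF assms] .
  then obtain B where B: "mat_inverse A = Some B"
    using mat_inverse(1)[OF A, where b = n] by (cases "mat_inverse A") auto
  then have AB: "A * B = 1\<^sub>m n" "B * A = 1\<^sub>m n" "B \<in> carrier_mat n n"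
    using mat_inverse(2)[OF A] by auto
  then have "det B * det A = 1" using det_mult[OF _ A, of B] by simp
  then have "det B \<noteq> 0" by auto
  with B AB that show ?thesis by blast
qed

lemma inj_on_mult_mat_vec:
  fixes A :: "'a :: field mat"
  assumes A: "A \<in> carrier_mat n n" and "det A \<noteq> 0"
  shows "inj_on (\<lambda>x. A *\<^sub>v x) (carrier_vec n)"
proof (rule inj_onI)
  fix x y :: "'a vec"
  assume x: "x \<in> carrier_vec n" and y: "y \<in> carrier_vec n" and "A *\<^sub>v x = A *\<^sub>v y"
  then have "A *\<^sub>v (x - y) = 0\<^sub>v n" using A by (simp add: mult_minus_distrib_mat_vec)
  moreover have "x - y \<in> carrier_vec n" using x y by simp
  ultimately have "x - y = 0\<^sub>v n" using det_0_iff_vec_prod_zero[OF A] assms(2) by blast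
  then show "x = y"
    using x y by (metis carrier_vecD eq_vecI index_minus_vec(1) index_zero_vec(1) right_minus_eq)
qed

lemma abs_mult_mat_vec_index_le:
  fixes A :: "real mat" and v :: "real vec"
  assumes A: "A \<in> carrier_mat nr nc" and v: "v \<in> carrier_vec nc" and i: "i < nr"
    and bound: "\<forall>j<nc. \<bar>v $ j\<bar> \<le> e"
  shows "\<bar>(A *\<^sub>v v) $ i\<bar> \<le> (\<Sum>j<nc. \<bar>A $$ (i, j)\<bar>) * e"
proof -
  have "\<bar>(A *\<^sub>v v) $ i\<bar> = \<bar>\<Sum>j<nc. A $$ (i, j) * v $ j\<bar>"
    using A v i by (simp add: scalar_prod_def atLeast0LessThan)
  also have "\<dots> \<le> (\<Sum>j<nc. \<bar>A $$ (i, j)\<bar> * e)"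
    using bound by (intro order.trans[OF sum_abs] sum_mono) (simp add: abs_mult mult_left_mono)
  finally show ?thesis by (simp add: sum_distrib_right)
qed

lemma dense_in_Rm_image_mult_mat:
  fixes A :: "real mat" and S :: "real vec set"
  assumes A: "A \<in> carrier_mat m m" and detA: "det A \<noteq> 0"
    and dense: "dense_in_Rm m S" and S: "S \<subseteq> carrier_vec m"
  shows "dense_in_Rm m ((\<lambda>x. A *\<^sub>v x) ` S)"
  unfolding dense_in_Rm_def
proof (intro ballI allI impI)
  fix y :: "real vec" and e :: real
  assume y: "y \<in> carrier_vec m" and e: "e > 0"
  obtain B where AB: "A * B = 1\<^sub>m m" and B: "B \<in> carrier_mat m m"
    using mat_inverse_exists[OF A detA] by blast
  define z where "z = B *\<^sub>v y"
  have z: "z \<in> carrier_vec m" and Az: "A *\<^sub>v z = y"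
    using B y AB by (auto simp: z_def assoc_mult_mat_vec[symmetric, OF A B y])
  define K where "K = 1 + (\<Sum>i<m. \<Sum>j<m. \<bar>A $$ (i, j)\<bar>)"
  have K: "K > 0" unfolding K_def by (smt (verit) sum_nonneg abs_ge_zero)
  obtain x where x: "x \<in> S" "x \<in> carrier_vec m" and close: "\<forall>j<m. \<bar>x $ j - z $ j\<bar> < e / K"
    using dense[unfolded dense_in_Rm_def, rule_format, OF z, of "e / K"] e K by auto
  have "\<bar>(A *\<^sub>v x) $ i - y $ i\<bar> < e" if i: "i < m" for i
  proof -
    have "(A *\<^sub>v x) $ i - y $ i = (A *\<^sub>v (x - z)) $ i"
      using A x(2) z i by (simp add: Az[symmetric] mult_minus_distrib_mat_vec)
    also have "\<bar>\<dots>\<bar> \<le> (\<Sum>j<m. \<bar>A $$ (i, j)\<bar>) * (e / K)"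
      using A x(2) z i close by (intro abs_mult_mat_vec_index_le) (auto intro: less_imp_le)
    also have "\<dots> \<le> (K - 1) * (e / K)"
    proof (rule mult_right_mono)
      show "(\<Sum>j<m. \<bar>A $$ (i, j)\<bar>) \<le> K - 1"
        unfolding K_def using i by (auto intro!: member_le_sum sum_nonneg)
      show "0 \<le> e / K" using e K by simp
    qed
    also have "\<dots> < e" using K e by (simp add: field_simps)
    finally show ?thesis .
  qed
  then show "\<exists>x'\<in>(\<lambda>x. A *\<^sub>v x) ` S. x' \<in> carrier_vec m \<and> (\<forall>i<m. \<bar>x' $ i - y $ i\<bar> < e)"
    using x A by (intro bexI[where x = "A *\<^sub>v x"]) auto
qed

lemma lattice_of_carrier:
  assumes "L \<in> carrier_mat s s"
  shows "lattice_of s L \<subseteq> carrier_vec s"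
  using assms by (auto simp: lattice_of_def int_vecs_def)

lemma lattice_of_eq_image: "lattice_of s L = (\<lambda>r. L *\<^sub>v r) ` int_vecs s"
  by (auto simp: lattice_of_def)

lemma lattice_of_mult:
  assumes D: "D \<in> carrier_mat s s" and L: "L \<in> carrier_mat s s"
  shows "lattice_of s (D * L) = (\<lambda>x. D *\<^sub>v x) ` lattice_of s L"
proof -
  have "lattice_of s (D * L) = (\<lambda>r. D *\<^sub>v (L *\<^sub>v r)) ` int_vecs s"
    unfolding lattice_of_eq_image
    by (intro image_cong refl) (auto simp: int_vecs_def assoc_mult_mat_vec[OF D L])
  then show ?thesis by (simp add: lattice_of_eq_image image_image)
qed

lemma lattice_of_int_mat:
  assumes A: "A \<in> carrier_mat s s" and A_int: "\<forall>i<s. \<forall>j<s. A $$ (i, j) \<in> \<int>"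
  shows "lattice_of s A \<subseteq> int_vecs s"
proof
  fix x assume "x \<in> lattice_of s A"
  then obtain r where r: "r \<in> carrier_vec s" "\<forall>j<s. r $ j \<in> \<int>" and x: "x = A *\<^sub>v r"
    by (auto simp: lattice_of_def int_vecs_def)
  have "x $ i \<in> \<int>" if "i < s" for i
    using A r A_int that by (auto simp: x scalar_prod_def intro!: Ints_sum Ints_mult)
  then show "x \<in> int_vecs s" using A r by (simp add: x int_vecs_def)
qed

lemma lattice_of_mult_int_mat_subset:
  assumes L: "L \<in> carrier_mat s s" and A: "A \<in> carrier_mat s s"
    and A_int: "\<forall>i<s. \<forall>j<s. A $$ (i, j) \<in> \<int>"
  shows "lattice_of s (L * A) \<subseteq> lattice_of s L"
proof -
  have "lattice_of s (L * A) = (\<lambda>x. L *\<^sub>v x) ` lattice_of s A"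
    using lattice_of_mult[OF L A] .
  also have "\<dots> \<subseteq> (\<lambda>x. L *\<^sub>v x) ` int_vecs s"
    using lattice_of_int_mat[OF A A_int] by (rule image_mono)
  finally show ?thesis by (simp add: lattice_of_eq_image)
qed

lemma mult_block_diag_mat_vec:
  assumes WA: "WA \<in> carrier_mat n n" and WB: "WB \<in> carrier_mat k k"
    and x: "x \<in> carrier_vec (n + k)"
  shows "four_block_mat WA (0\<^sub>m n k) (0\<^sub>m k n) WB *\<^sub>v x
    = WA *\<^sub>v vec_first x n @\<^sub>v WB *\<^sub>v vec_last x k"
  using mult_mat_vec_split[OF WA WB vec_first_carrier vec_last_carrier]
    vec_first_last_append[OF x]
  by metis

lemma vec_first_append:
  "a \<in> carrier_vec n \<Longrightarrow> vec_first (a @\<^sub>v b) n = a"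
  by (intro eq_vecI) (auto simp: vec_first_def)

lemma vec_last_append:
  "b \<in> carrier_vec k \<Longrightarrow> vec_last (a @\<^sub>v b) k = b"
  by (intro eq_vecI) (auto simp: vec_last_def)

lemma pi_par_block_diag:
  assumes "WA \<in> carrier_mat n n" "WB \<in> carrier_mat (s - n) (s - n)" "n \<le> s"
    and "x \<in> carrier_vec s"
  shows "pi_par n (four_block_mat WA (0\<^sub>m n (s - n)) (0\<^sub>m (s - n) n) WB *\<^sub>v x)
    = WA *\<^sub>v pi_par n x"
  using assms mult_block_diag_mat_vec[of WA n WB "s - n" x]
  by (simp add: pi_par_def vec_first_append)

lemma pi_perp_block_diag:
  assumes "WA \<in> carrier_mat n n" "WB \<in> carrier_mat (s - n) (s - n)" "n \<le> s"
    and "x \<in> carrier_vec s"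
  shows "pi_perp s n (four_block_mat WA (0\<^sub>m n (s - n)) (0\<^sub>m (s - n) n) WB *\<^sub>v x)
    = WB *\<^sub>v pi_perp s n x"
  using assms mult_block_diag_mat_vec[of WA n WB "s - n" x]
  by (simp add: pi_perp_def vec_last_append)

lemma inj_on_image_intertwined:
  assumes "inj_on p S" and "inj_on h (p ` S)" and "\<And>x. x \<in> S \<Longrightarrow> p (g x) = h (p x)"
  shows "inj_on p (g ` S)"
proof (rule inj_on_imageI)
  have "inj_on (h \<circ> p) S" using assms(1,2) by (rule comp_inj_on)
  then show "inj_on (p \<circ> g) S" using assms(3) by (simp add: inj_on_def)
qed

lemma generic_cps_block_diag_mult:
  assumes G: "generic_cps s n L"
    and WA: "WA \<in> carrier_mat n n" "det WA \<noteq> 0"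
    and WB: "WB \<in> carrier_mat (s - n) (s - n)" "det WB \<noteq> 0"
  shows "generic_cps s n (four_block_mat WA (0\<^sub>m n (s - n)) (0\<^sub>m (s - n) n) WB * L)"
proof -
  define D where "D = four_block_mat WA (0\<^sub>m n (s - n)) (0\<^sub>m (s - n) n) WB"
  from G have ns: "1 \<le> n" "n < s" and L: "L \<in> carrier_mat s s" "det L \<noteq> 0"
    and inj_par: "inj_on (pi_par n) (lattice_of s L)"
    and inj_perp: "inj_on (pi_perp s n) (lattice_of s L)"
    and dense: "dense_in_Rm (s - n) (pi_perp s n ` lattice_of s L)"
    by (simp_all add: generic_cps_def)
  have D: "D \<in> carrier_mat s s"
    using four_block_carrier_mat[OF WA(1) WB(1)] ns by (simp add: D_def)
  have "det D \<noteq> 0"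
    using det_four_block_mat_lower_left_zero[OF WA(1) _ refl WB(1)] WA WB by (simp add: D_def)
  then have det: "det (D * L) \<noteq> 0" using L D by (simp add: det_mult)
  have lattice: "lattice_of s (D * L) = (\<lambda>x. D *\<^sub>v x) ` lattice_of s L"
    using lattice_of_mult[OF D L(1)] .
  have carrier: "x \<in> carrier_vec s" if "x \<in> lattice_of s L" for x
    using lattice_of_carrier[OF L(1)] that by blast
  have par: "pi_par n (D *\<^sub>v x) = WA *\<^sub>v pi_par n x" if "x \<in> lattice_of s L" for x
    using pi_par_block_diag[OF WA(1) WB(1)] ns carrier[OF that] by (simp add: D_def)
  have perp: "pi_perp s n (D *\<^sub>v x) = WB *\<^sub>v pi_perp s n x" if "x \<in> lattice_of s L" for x
    using pi_perp_block_diag[OF WA(1) WB(1)] ns carrier[OF that] by (simp add: D_def)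
  have "inj_on (pi_par n) (lattice_of s (D * L))"
    unfolding lattice
    by (rule inj_on_image_intertwined[OF inj_par inj_on_subset[OF inj_on_mult_mat_vec[OF WA]] par])
      (auto simp: pi_par_def)
  moreover have "inj_on (pi_perp s n) (lattice_of s (D * L))"
    unfolding lattice
    by (rule inj_on_image_intertwined[OF inj_perp inj_on_subset[OF inj_on_mult_mat_vec[OF WB]] perp])
      (auto simp: pi_perp_def)
  moreover have "dense_in_Rm (s - n) (pi_perp s n ` lattice_of s (D * L))"
  proof -
    have "pi_perp s n ` lattice_of s (D * L) = (\<lambda>y. WB *\<^sub>v y) ` pi_perp s n ` lattice_of s L"
      unfolding lattice image_image using perp by (rule image_cong[OF refl])
    moreover have "pi_perp s n ` lattice_of s L \<subseteq> carrier_vec (s - n)"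
      by (auto simp: pi_perp_def)
    ultimately show ?thesis using dense_in_Rm_image_mult_mat[OF WB dense] by simp
  qed
  ultimately show ?thesis
    using ns L D det by (simp add: generic_cps_def D_def)
qed

lemma generic_cps_smult:
  assumes G: "generic_cps s n L" and c: "c \<noteq> 0"
  shows "generic_cps s n (c \<cdot>\<^sub>m L)"
proof -
  have ns: "n < s" and L: "L \<in> carrier_mat s s" using G by (simp_all add: generic_cps_def)
  have "four_block_mat (c \<cdot>\<^sub>m 1\<^sub>m n) (0\<^sub>m n (s - n)) (0\<^sub>m (s - n) n) (c \<cdot>\<^sub>m 1\<^sub>m (s - n))
      = c \<cdot>\<^sub>m 1\<^sub>m s"
    using ns by (intro eq_matI) (auto simp: index_mat_four_block)
  also have "\<dots> * L = c \<cdot>\<^sub>m L" using mult_smult_assoc_mat[OF one_carrier_mat L] L by simp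
  finally show ?thesis
    using generic_cps_block_diag_mult[OF G, of "c \<cdot>\<^sub>m 1\<^sub>m n" "c \<cdot>\<^sub>m 1\<^sub>m (s - n)"] c
    by (simp add: det_smult)
qed

lemma generic_cps_between_lattices:
  assumes "generic_cps s n L\<^sub>1" and "generic_cps s n L\<^sub>2"
    and "L \<in> carrier_mat s s" and "det L \<noteq> 0"
    and "lattice_of s L\<^sub>1 \<subseteq> lattice_of s L" and "lattice_of s L \<subseteq> lattice_of s L\<^sub>2"
  shows "generic_cps s n L"
  using assms unfolding generic_cps_def dense_in_Rm_def
  by (meson image_mono inj_on_subset subsetD)

lemma generic_cps_mult_of_rat_mat:
  fixes P :: "rat mat"
  assumes G: "generic_cps s n L" and P: "P \<in> carrier_mat s s" "det P \<noteq> 0"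
  shows "generic_cps s n (L * map_mat of_rat P)"
proof -
  obtain Q where PQ: "P * Q = 1\<^sub>m s" and Q: "Q \<in> carrier_mat s s"
    using mat_inverse_exists[OF P] by blast
  define P' Q' where "P' = map_mat (of_rat :: rat \<Rightarrow> real) P"
    and "Q' = map_mat (of_rat :: rat \<Rightarrow> real) Q"
  have P': "P' \<in> carrier_mat s s" and Q': "Q' \<in> carrier_mat s s"
    using P Q by (simp_all add: P'_def Q'_def)
  have "P' * Q' = 1\<^sub>m s"
    using of_rat_hom.mat_hom_mult[OF P(1) Q, symmetric] PQ
    by (simp add: P'_def Q'_def of_rat_hom.mat_hom_one)
  from G have L: "L \<in> carrier_mat s s" "det L \<noteq> 0" by (simp_all add: generic_cps_def)
  obtain N :: int where N: "N > 0" and NP: "\<forall>i<s. \<forall>j<s. (of_int N \<cdot>\<^sub>m P') $$ (i, j) \<in> \<int>"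
    using of_rat_mat_common_denominator[of P] P by (auto simp: P'_def)
  obtain M :: int where M: "M > 0" and MQ: "\<forall>i<s. \<forall>j<s. (of_int M \<cdot>\<^sub>m Q') $$ (i, j) \<in> \<int>"
    using of_rat_mat_common_denominator[of Q] Q by (auto simp: Q'_def)
  have "((1 / of_int N) \<cdot>\<^sub>m L) * (of_int N \<cdot>\<^sub>m P') = (1 / of_int N) \<cdot>\<^sub>m (of_int N \<cdot>\<^sub>m (L * P'))"
    using mult_smult_assoc_mat[OF L(1) smult_carrier_mat[OF P']] mult_smult_distrib[OF L(1) P']
    by simp
  also have "\<dots> = L * P'" using N by (intro eq_matI) auto
  finally have "L * P' = ((1 / of_int N) \<cdot>\<^sub>m L) * (of_int N \<cdot>\<^sub>m P')" ..
  then have upper: "lattice_of s (L * P') \<subseteq> lattice_of s ((1 / of_int N) \<cdot>\<^sub>m L)"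
    using lattice_of_mult_int_mat_subset[OF _ _ NP] L P' by simp
  have "(L * P') * (of_int M \<cdot>\<^sub>m Q') = of_int M \<cdot>\<^sub>m (L * (P' * Q'))"
    using mult_smult_distrib[OF mult_carrier_mat[OF L(1) P'] Q'] assoc_mult_mat[OF L(1) P' Q']
    by simp
  then have "of_int M \<cdot>\<^sub>m L = (L * P') * (of_int M \<cdot>\<^sub>m Q')"
    using L \<open>P' * Q' = 1\<^sub>m s\<close> by simp
  then have lower: "lattice_of s (of_int M \<cdot>\<^sub>m L) \<subseteq> lattice_of s (L * P')"
    using lattice_of_mult_int_mat_subset[OF _ _ MQ] L P' Q' by simp
  have "det P' \<noteq> 0" using P by (simp add: P'_def of_rat_hom.hom_det)
  then have "det (L * P') \<noteq> 0" using L P' by (simp add: det_mult)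
  then show ?thesis
    using generic_cps_between_lattices[OF generic_cps_smult[OF G] generic_cps_smult[OF G] _ _ lower upper]
      L P' N M unfolding P'_def by simp
qed

theorem lemma2:
  fixes s n :: nat and L WA WB :: "real mat" and Q :: "rat mat"
  assumes "generic_cps s n L"
    and "WA \<in> carrier_mat n n" and "det WA \<noteq> 0"
    and "WB \<in> carrier_mat (s - n) (s - n)" and "det WB \<noteq> 0"
    and "Q \<in> carrier_mat s s" and "det Q \<noteq> 0"
  shows "generic_cps s n
    (four_block_mat WA (0\<^sub>m n (s - n)) (0\<^sub>m (s - n) n) WB * L
       * map_mat of_rat (the (mat_inverse Q)))"
proof -
  obtain P where P: "mat_inverse Q = Some P" "P \<in> carrier_mat s s" "det P \<noteq> 0"
    using mat_inverse_exists[OF assms(6,7)] by blast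
  have "generic_cps s n (four_block_mat WA (0\<^sub>m n (s - n)) (0\<^sub>m (s - n) n) WB * L)"
    using generic_cps_block_diag_mult assms(1-5) .
  then show ?thesis
    using generic_cps_mult_of_rat_mat P by simp
qed

end
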